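(* Let $s\ge 2$ be an even integer, $n=s^2$, and $k\ge1$. Let $\mathcal{G}^{2d}$ be the $s\times s$ two-dimensional grid graph, whose nodes are the pairs $(a,b)$ with $1\le a,b\le s$ and in which $(a,b)$ and $(a',b')$ are adjacent iff $|a-a'|+|b-b'|=1$. Then $$M^{\mathcal{G}^{2d}}_{k,n}\le 2M^C_{k,\,n/2-\sqrt n/2}+M^C_{k,\sqrt n}+2 .$$
   Context: For a graph $G$ on $n$ nodes, a measurement matrix for $G$ is a $0$-$1$ matrix with columns indexed by the nodes in which every nonzero row has a support that induces a connected subgraph of $G$. A vector is $k$-sparse if it has at most $k$ nonzero entries. $A$ identifies all $k$-sparse vectors if $Ax_1\ne Ax_2$ for every two distinct $k$-sparse $x_1,x_2\in\mathbb{R}^n$. $M^G_{k,n}$ is the minimum number of rows of a measurement matrix for $G$ that identifies all $k$-sparse vectors. $M^C_{k,N}$ is the minimum number of rows of an arbitrary $0$-$1$ matrix with $N$ columns that identifies all $k$-sparse vectors in $\mathbb{R}^N$. *)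

theory Defs
  imports Complex_Main
begin

text \<open>A 0-1 matrix with m rows and columns indexed by a finite set V is represented
  by the supports of its rows: R i \<subseteq> V for i < m.\<close>

definition zero_one_matrix :: "'a set \<Rightarrow> (nat \<Rightarrow> 'a set) \<Rightarrow> nat \<Rightarrow> bool" where
  "zero_one_matrix V R m \<longleftrightarrow> (\<forall>i<m. R i \<subseteq> V)"

definition mat_apply :: "(nat \<Rightarrow> 'a set) \<Rightarrow> ('a \<Rightarrow> real) \<Rightarrow> nat \<Rightarrow> real" where
  "mat_apply R x i = (\<Sum>j\<in>R i. x j)"

definition sparse_vec :: "'a set \<Rightarrow> nat \<Rightarrow> ('a \<Rightarrow> real) \<Rightarrow> bool" where
  "sparse_vec V k x \<longleftrightarrow> (\<forall>j. j \<notin> V \<longrightarrow> x j = 0) \<and> card {j\<in>V. x j \<noteq> 0} \<le> k"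

definition identifies :: "'a set \<Rightarrow> (nat \<Rightarrow> 'a set) \<Rightarrow> nat \<Rightarrow> nat \<Rightarrow> bool" where
  "identifies V R m k \<longleftrightarrow>
     (\<forall>x1 x2. sparse_vec V k x1 \<and> sparse_vec V k x2 \<and> x1 \<noteq> x2 \<longrightarrow>
        (\<exists>i<m. mat_apply R x1 i \<noteq> mat_apply R x2 i))"

definition induces_connected :: "('a \<Rightarrow> 'a \<Rightarrow> bool) \<Rightarrow> 'a set \<Rightarrow> bool" where
  "induces_connected E S \<longleftrightarrow>
     (\<forall>u\<in>S. \<forall>v\<in>S. (\<lambda>a b. E a b \<and> a \<in> S \<and> b \<in> S)\<^sup>*\<^sup>* u v)"

definition measurement_matrix :: "'a set \<Rightarrow> ('a \<Rightarrow> 'a \<Rightarrow> bool) \<Rightarrow> (nat \<Rightarrow> 'a set) \<Rightarrow> nat \<Rightarrow> bool" where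
  "measurement_matrix V E R m \<longleftrightarrow>
     zero_one_matrix V R m \<and> (\<forall>i<m. R i \<noteq> {} \<longrightarrow> induces_connected E (R i))"

text \<open>M^G_{k,n} for the graph (V,E), n = card V.\<close>
definition M_G :: "'a set \<Rightarrow> ('a \<Rightarrow> 'a \<Rightarrow> bool) \<Rightarrow> nat \<Rightarrow> nat" where
  "M_G V E k = (LEAST m. \<exists>R. measurement_matrix V E R m \<and> identifies V R m k)"

definition M_C :: "nat \<Rightarrow> nat \<Rightarrow> nat" where
  "M_C k N = (LEAST m. \<exists>R. zero_one_matrix {0..<N} R m \<and> identifies {0..<N} R m k)"

definition grid_V :: "nat \<Rightarrow> (nat \<times> nat) set" where
  "grid_V s = {1..s} \<times> {1..s}"

definition grid_E :: "(nat \<times> nat) \<Rightarrow> (nat \<times> nat) \<Rightarrow> bool" where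
  "grid_E p q \<longleftrightarrow> \<bar>int (fst p) - int (fst q)\<bar> + \<bar>int (snd p) - int (snd q)\<bar> = 1"

end

theory Submission
  imports Defs
begin

text \<open>Two complementary combs cover the grid: each consists of the last row together with
  every second column, the odd columns for one comb and the even columns for the other.
  A comb is connected and every other cell of the first s - 1 rows is adjacent to it, so adding
  the comb to each row of an optimal unrestricted matrix on those (n - s)/2 cells keeps all rows
  connected; one extra row measuring the comb alone lets us subtract its contribution. This
  determines x on the first s - 1 rows. With their sum known, the same construction with the
  first s - 1 rows as hub and an unrestricted matrix on the s cells of the last row needs no
  extra row and determines the rest.\<close>

definition induced_edge :: "('a \<Rightarrow> 'a \<Rightarrow> bool) \<Rightarrow> 'a set \<Rightarrow> 'a \<Rightarrow> 'a \<Rightarrow> bool" where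
  "induced_edge E S a b \<longleftrightarrow> E a b \<and> a \<in> S \<and> b \<in> S"

lemma induces_connected_iff: "induces_connected E S \<longleftrightarrow> (\<forall>u\<in>S. \<forall>v\<in>S. (induced_edge E S)\<^sup>*\<^sup>* u v)"
  unfolding induces_connected_def induced_edge_def ..

lemma induced_edge_rtranclp_sym:
  assumes "symp E" and "(induced_edge E S)\<^sup>*\<^sup>* u v"
  shows "(induced_edge E S)\<^sup>*\<^sup>* v u"
proof -
  have "symp (induced_edge E S)" using assms(1) unfolding induced_edge_def by (auto intro!: sympI dest: sympD)
  then show ?thesis using assms(2) symp_rtranclp by (auto dest: sympD)
qed

lemma induced_edge_rtranclp_mono:
  "S \<subseteq> T \<Longrightarrow> (induced_edge E S)\<^sup>*\<^sup>* u v \<Longrightarrow> (induced_edge E T)\<^sup>*\<^sup>* u v"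
  by (rule mono_rtranclp[rule_format, of "induced_edge E S"]) (auto simp: induced_edge_def)

lemma induces_connectedI_center:
  assumes sym: "symp E" and reach: "\<forall>u\<in>S. (induced_edge E S)\<^sup>*\<^sup>* u c"
  shows "induces_connected E S"
  unfolding induces_connected_iff
proof (intro ballI)
  fix u v assume "u \<in> S" "v \<in> S"
  then show "(induced_edge E S)\<^sup>*\<^sup>* u v"
    using reach induced_edge_rtranclp_sym[OF sym, of S v c] by (meson rtranclp_trans)
qed

lemma induces_connected_Un_adjacent:
  assumes sym: "symp E" and H: "induces_connected E H" "H \<noteq> {}"
    and A: "\<forall>v\<in>A. \<exists>h\<in>H. E v h"
  shows "induces_connected E (H \<union> A)"
proof -
  obtain c where c: "c \<in> H" using H(2) by auto
  have to_c: "(induced_edge E (H \<union> A))\<^sup>*\<^sup>* h c" if "h \<in> H" for h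
    using H(1) that c induced_edge_rtranclp_mono[of H "H \<union> A"] unfolding induces_connected_iff by blast
  have "\<forall>u\<in>H \<union> A. (induced_edge E (H \<union> A))\<^sup>*\<^sup>* u c"
  proof
    fix u assume u: "u \<in> H \<union> A"
    show "(induced_edge E (H \<union> A))\<^sup>*\<^sup>* u c"
    proof (cases "u \<in> H")
      case False
      then obtain h where "h \<in> H" "E u h" using A u by auto
      then have "induced_edge E (H \<union> A) u h" using u unfolding induced_edge_def by auto
      then show ?thesis using to_c[OF \<open>h \<in> H\<close>] by (rule converse_rtranclp_into_rtranclp)
    qed (use to_c in auto)
  qed
  then show ?thesis using induces_connectedI_center[of E "H \<union> A" c] sym by blast
qed

lemma M_C_witness: "\<exists>R. zero_one_matrix {0..<N} R N \<and> identifies {0..<N} R N k"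
proof (intro exI conjI)
  show "zero_one_matrix {0..<N} (\<lambda>i. {i}) N" unfolding zero_one_matrix_def by auto
  show "identifies {0..<N} (\<lambda>i. {i}) N k"
    unfolding identifies_def mat_apply_def
  proof (intro allI impI, elim conjE)
    fix x1 x2 assume sparse: "sparse_vec {0..<N} k x1" "sparse_vec {0..<N} k x2" and "x1 \<noteq> x2"
    then obtain j where j: "x1 j \<noteq> x2 j" by (meson ext)
    then have "j < N" using sparse unfolding sparse_vec_def by force
    then show "\<exists>i<N. (\<Sum>j\<in>{i}. x1 j) \<noteq> (\<Sum>j\<in>{i}. x2 j)" using j by auto
  qed
qed

lemma M_C_attained:
  obtains R where "zero_one_matrix {0..<N} R (M_C k N)" "identifies {0..<N} R (M_C k N) k"
proof -
  have "\<exists>m R. zero_one_matrix {0..<N} R m \<and> identifies {0..<N} R m k"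
    using M_C_witness by blast
  then have "\<exists>R. zero_one_matrix {0..<N} R (M_C k N) \<and> identifies {0..<N} R (M_C k N) k"
    unfolding M_C_def by (rule LeastI_ex)
  then show ?thesis using that by blast
qed

lemma sparse_vec_eqI:
  assumes "sparse_vec V k x1" "sparse_vec V k x2" "\<forall>v\<in>V. x1 v = x2 v"
  shows "x1 = x2"
  using assms unfolding sparse_vec_def by (metis ext)

lemma identifies_reindexed:
  fixes f :: "nat \<Rightarrow> 'a" and x1 x2 :: "'a \<Rightarrow> real"
  assumes R: "zero_one_matrix {0..<N} R m" "identifies {0..<N} R m k"
    and f: "bij_betw f {0..<N} C" and "C \<subseteq> V" "finite V"
    and sparse: "sparse_vec V k x1" "sparse_vec V k x2"
    and eq: "\<forall>i<m. sum x1 (f ` R i) = sum x2 (f ` R i)"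
  shows "\<forall>v\<in>C. x1 v = x2 v"
proof -
  have inj: "inj_on f {0..<N}" and img: "f ` {0..<N} = C" using f by (auto simp: bij_betw_def)
  define pull where "pull x = (\<lambda>j. if j < N then x (f j) else 0)" for x :: "'a \<Rightarrow> real"
  have pull_sparse: "sparse_vec {0..<N} k (pull x)" if "sparse_vec V k x" for x
  proof -
    have "card {j \<in> {0..<N}. pull x j \<noteq> 0} \<le> card {v \<in> V. x v \<noteq> 0}"
    proof (rule card_inj_on_le)
      show "inj_on f {j \<in> {0..<N}. pull x j \<noteq> 0}" using inj by (rule inj_on_subset) auto
      show "f ` {j \<in> {0..<N}. pull x j \<noteq> 0} \<subseteq> {v \<in> V. x v \<noteq> 0}"
        using img \<open>C \<subseteq> V\<close> by (auto simp: pull_def)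
      show "finite {v \<in> V. x v \<noteq> 0}" using \<open>finite V\<close> by simp
    qed
    then show ?thesis using that unfolding sparse_vec_def by (auto simp: pull_def)
  qed
  have pull_apply: "mat_apply R (pull x) i = sum x (f ` R i)" if "i < m" for x i
  proof -
    have Ri: "R i \<subseteq> {0..<N}" using R(1) that unfolding zero_one_matrix_def by auto
    have "sum x (f ` R i) = sum (x \<circ> f) (R i)"
      by (rule sum.reindex) (rule inj_on_subset[OF inj Ri])
    also have "\<dots> = sum (pull x) (R i)" using Ri by (intro sum.cong) (auto simp: pull_def)
    finally show ?thesis unfolding mat_apply_def by simp
  qed
  have "pull x1 = pull x2"
  proof (rule ccontr)
    assume "pull x1 \<noteq> pull x2"
    then obtain i where "i < m" "mat_apply R (pull x1) i \<noteq> mat_apply R (pull x2) i"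
      using R(2) pull_sparse[OF sparse(1)] pull_sparse[OF sparse(2)] unfolding identifies_def by blast
    then show False using pull_apply eq by simp
  qed
  show ?thesis
  proof
    fix v assume "v \<in> C"
    then obtain j where "j < N" "v = f j" using img by auto
    then show "x1 v = x2 v" using fun_cong[OF \<open>pull x1 = pull x2\<close>, of j] by (simp add: pull_def)
  qed
qed

definition hub_for :: "'a set \<Rightarrow> ('a \<Rightarrow> 'a \<Rightarrow> bool) \<Rightarrow> 'a set \<Rightarrow> 'a set \<Rightarrow> bool" where
  "hub_for V E H C \<longleftrightarrow> H \<subseteq> V \<and> H \<noteq> {} \<and> induces_connected E H \<and>
     C \<subseteq> V \<and> H \<inter> C = {} \<and> (\<forall>v\<in>C. \<exists>h\<in>H. E v h)"

definition connected_rows :: "'a set \<Rightarrow> ('a \<Rightarrow> 'a \<Rightarrow> bool) \<Rightarrow> 'a set list \<Rightarrow> bool" where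
  "connected_rows V E Rs \<longleftrightarrow> (\<forall>S\<in>set Rs. S \<subseteq> V \<and> induces_connected E S)"

definition hub_measurements ::
    "'a set \<Rightarrow> ('a \<Rightarrow> 'a \<Rightarrow> bool) \<Rightarrow> nat \<Rightarrow> 'a set \<Rightarrow> 'a set \<Rightarrow> 'a set list \<Rightarrow> bool" where
  "hub_measurements V E k H C Rs \<longleftrightarrow> connected_rows V E Rs \<and>
     (\<forall>x1 x2. sparse_vec V k x1 \<and> sparse_vec V k x2 \<and> sum x1 H = sum x2 H \<and>
        (\<forall>S\<in>set Rs. sum x1 S = sum x2 S) \<longrightarrow> (\<forall>v\<in>C. x1 v = x2 v))"

lemma connected_rows_simps [simp]:
  "connected_rows V E [] \<longleftrightarrow> True"
  "connected_rows V E (S # Rs) \<longleftrightarrow> S \<subseteq> V \<and> induces_connected E S \<and> connected_rows V E Rs"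
  "connected_rows V E (Rs @ Rs') \<longleftrightarrow> connected_rows V E Rs \<and> connected_rows V E Rs'"
  unfolding connected_rows_def by auto

lemma hub_measurementsD:
  assumes "hub_measurements V E k H C Rs" "sparse_vec V k x1" "sparse_vec V k x2"
    "sum x1 H = sum x2 H" "\<forall>S\<in>set Rs. sum x1 S = sum x2 S"
  shows "\<forall>v\<in>C. x1 v = x2 v"
  using assms unfolding hub_measurements_def by blast

lemma hub_measurements_connected_rows:
  "hub_measurements V E k H C Rs \<Longrightarrow> connected_rows V E Rs"
  unfolding hub_measurements_def by blast

lemma hub_for_connected_rows: "hub_for V E H C \<Longrightarrow> connected_rows V E [H]"
  unfolding hub_for_def by simp

lemma hub_measurements_exist:
  fixes E :: "'a \<Rightarrow> 'a \<Rightarrow> bool"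
  assumes sym: "symp E" and "finite V" and hub: "hub_for V E H C"
  obtains Rs where "length Rs = M_C k (card C)" and "hub_measurements V E k H C Rs"
proof -
  have fin: "finite H" "finite C" using hub \<open>finite V\<close> unfolding hub_for_def by (auto intro: finite_subset)
  obtain f where f: "bij_betw f {0..<card C} C" using ex_bij_betw_nat_finite[OF fin(2)] by blast
  obtain R where R: "zero_one_matrix {0..<card C} R (M_C k (card C))" "identifies {0..<card C} R (M_C k (card C)) k"
    by (rule M_C_attained)
  define Rs where "Rs = map (\<lambda>i. H \<union> f ` R i) [0..<M_C k (card C)]"
  have RC: "f ` R i \<subseteq> C" if "i < M_C k (card C)" for i
    using R(1) f that unfolding zero_one_matrix_def bij_betw_def by blast
  have "connected_rows V E Rs"
    unfolding connected_rows_def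
  proof
    fix S assume "S \<in> set Rs"
    then obtain i where i: "i < M_C k (card C)" "S = H \<union> f ` R i" by (auto simp: Rs_def)
    show "S \<subseteq> V \<and> induces_connected E S"
      using RC[OF i(1)] hub induces_connected_Un_adjacent[OF sym, of H "f ` R i"]
      unfolding i(2) hub_for_def by blast
  qed
  moreover have "\<forall>v\<in>C. x1 v = x2 v"
    if sparse: "sparse_vec V k x1" "sparse_vec V k x2"
      and H: "sum x1 H = sum x2 H" and rows: "\<forall>S\<in>set Rs. sum x1 S = sum x2 S" for x1 x2
  proof -
    have "sum x (H \<union> f ` R i) = sum x H + sum x (f ` R i)" if "i < M_C k (card C)" for x :: "'a \<Rightarrow> real" and i
      using RC[OF that] finite_subset[OF RC[OF that] fin(2)] hub fin
      by (intro sum.union_disjoint) (auto simp: hub_for_def)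
    then have "\<forall>i<M_C k (card C). sum x1 (f ` R i) = sum x2 (f ` R i)"
      using rows H unfolding Rs_def by auto
    then show ?thesis
      using identifies_reindexed[OF R f _ \<open>finite V\<close> sparse] hub unfolding hub_for_def by blast
  qed
  ultimately show ?thesis using that[of Rs] unfolding hub_measurements_def by (simp add: Rs_def)
qed

lemma M_G_le_length:
  assumes rows: "connected_rows V E Rs"
    and ident: "\<And>x1 x2. sparse_vec V k x1 \<Longrightarrow> sparse_vec V k x2 \<Longrightarrow>
       \<forall>S\<in>set Rs. sum x1 S = sum x2 S \<Longrightarrow> x1 = x2"
  shows "M_G V E k \<le> length Rs"
proof -
  have "measurement_matrix V E ((!) Rs) (length Rs)"
    using rows unfolding measurement_matrix_def zero_one_matrix_def connected_rows_def by auto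
  moreover have "identifies V ((!) Rs) (length Rs) k"
    unfolding identifies_def
  proof (intro allI impI, elim conjE)
    fix x1 x2 assume "sparse_vec V k x1" "sparse_vec V k x2" "x1 \<noteq> x2"
    then have "\<not> (\<forall>S\<in>set Rs. sum x1 S = sum x2 S)" using ident by blast
    then show "\<exists>i<length Rs. mat_apply ((!) Rs) x1 i \<noteq> mat_apply ((!) Rs) x2 i"
      by (auto simp: mat_apply_def in_set_conv_nth)
  qed
  ultimately show ?thesis unfolding M_G_def by (blast intro: Least_le)
qed

lemma M_G_le_hub_cover:
  assumes hubs: "hub_for V E H1 C1" "hub_for V E H2 C2"
    and Rs1: "hub_measurements V E k H1 C1 Rs1" and Rs2: "hub_measurements V E k H2 C2 Rs2"
    and Rs3: "hub_measurements V E k (C1 \<union> C2) L Rs3" and cover: "V = C1 \<union> C2 \<union> L"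
  shows "M_G V E k \<le> length (H1 # Rs1 @ H2 # Rs2 @ Rs3)"
proof (rule M_G_le_length)
  show "connected_rows V E (H1 # Rs1 @ H2 # Rs2 @ Rs3)"
    using hubs[THEN hub_for_connected_rows] Rs1 Rs2 Rs3 by (simp add: hub_measurements_connected_rows)
  fix x1 x2 assume sparse: "sparse_vec V k x1" "sparse_vec V k x2"
    and eq: "\<forall>S\<in>set (H1 # Rs1 @ H2 # Rs2 @ Rs3). sum x1 S = sum x2 S"
  have "\<forall>v\<in>C1. x1 v = x2 v" "\<forall>v\<in>C2. x1 v = x2 v"
    by (rule hub_measurementsD[OF Rs1 sparse] hub_measurementsD[OF Rs2 sparse]; use eq in simp)+
  then have C12: "\<forall>v\<in>C1 \<union> C2. x1 v = x2 v" by blast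
  then have "sum x1 (C1 \<union> C2) = sum x2 (C1 \<union> C2)" by (intro sum.cong) blast+
  moreover have "\<forall>S\<in>set Rs3. sum x1 S = sum x2 S" using eq by simp
  ultimately have "\<forall>v\<in>L. x1 v = x2 v" by (rule hub_measurementsD[OF Rs3 sparse])
  then show "x1 = x2" using C12 cover sparse_vec_eqI[OF sparse] by blast
qed

lemma symp_grid_E: "symp grid_E"
  unfolding grid_E_def by (auto intro: sympI)

lemma grid_walk_fst:
  assumes "\<forall>c. a \<le> c \<and> c \<le> a + d \<longrightarrow> (c, b) \<in> S"
  shows "(induced_edge grid_E S)\<^sup>*\<^sup>* (a, b) (a + d, b)"
  using assms
proof (induction d)
  case (Suc d)
  then have "(induced_edge grid_E S)\<^sup>*\<^sup>* (a, b) (a + d, b)" by auto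
  moreover have "induced_edge grid_E S (a + d, b) (a + Suc d, b)"
    using Suc.prems unfolding induced_edge_def grid_E_def by auto
  ultimately show ?case by (rule rtranclp.rtrancl_into_rtrancl)
qed simp

lemma grid_walk_snd:
  assumes "\<forall>c. b \<le> c \<and> c \<le> b + d \<longrightarrow> (a, c) \<in> S"
  shows "(induced_edge grid_E S)\<^sup>*\<^sup>* (a, b) (a, b + d)"
  using assms
proof (induction d)
  case (Suc d)
  then have "(induced_edge grid_E S)\<^sup>*\<^sup>* (a, b) (a, b + d)" by auto
  moreover have "induced_edge grid_E S (a, b + d) (a, b + Suc d)"
    using Suc.prems unfolding induced_edge_def grid_E_def by auto
  ultimately show ?case by (rule rtranclp.rtrancl_into_rtrancl)
qed simp

lemma grid_rect_connected: "induces_connected grid_E ({1..r} \<times> {1..t})"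
proof -
  let ?S = "{1..r} \<times> {1..t}"
  have "(induced_edge grid_E ?S)\<^sup>*\<^sup>* (a, b) (1, 1)" if "(a, b) \<in> ?S" for a b
  proof -
    have "(induced_edge grid_E ?S)\<^sup>*\<^sup>* (1, 1) (1 + (a - 1), 1)"
      by (rule grid_walk_fst) (use that in auto)
    moreover have "(induced_edge grid_E ?S)\<^sup>*\<^sup>* (a, 1) (a, 1 + (b - 1))"
      by (rule grid_walk_snd) (use that in auto)
    ultimately have "(induced_edge grid_E ?S)\<^sup>*\<^sup>* (1, 1) (a, b)"
      using that by (simp add: rtranclp_trans[of _ "(1, 1)" "(a, 1)"])
    then show ?thesis using induced_edge_rtranclp_sym[of grid_E ?S] symp_grid_E by blast
  qed
  then show ?thesis using induces_connectedI_center[of grid_E ?S "(1, 1)"] symp_grid_E by blast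
qed

definition grid_comb :: "nat \<Rightarrow> (nat \<Rightarrow> bool) \<Rightarrow> (nat \<times> nat) set" where
  "grid_comb s P = {p \<in> grid_V s. P (snd p) \<or> fst p = s}"

lemma grid_comb_connected: "induces_connected grid_E (grid_comb s P)"
proof -
  let ?H = "grid_comb s P"
  have spine: "(induced_edge grid_E ?H)\<^sup>*\<^sup>* (s, b) (s, s)" if "1 \<le> b" "b \<le> s" for b
    using grid_walk_snd[where b=b and d="s - b" and S="?H" and a=s] that by (auto simp: grid_comb_def grid_V_def)
  have "(induced_edge grid_E ?H)\<^sup>*\<^sup>* (a, b) (s, s)" if ab: "(a, b) \<in> ?H" for a b
  proof (cases "a = s")
    case False
    then have "(induced_edge grid_E ?H)\<^sup>*\<^sup>* (a, b) (a + (s - a), b)"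
      using ab by (intro grid_walk_fst) (auto simp: grid_comb_def grid_V_def)
    then show ?thesis
      using ab spine[of b] rtranclp_trans by (fastforce simp: grid_comb_def grid_V_def)
  qed (use ab spine in \<open>auto simp: grid_comb_def grid_V_def\<close>)
  then have "\<forall>u\<in>?H. (induced_edge grid_E ?H)\<^sup>*\<^sup>* u (s, s)" by fastforce
  then show ?thesis using induces_connectedI_center[of grid_E ?H "(s, s)"] symp_grid_E by blast
qed

lemma grid_comb_hub:
  assumes "s \<ge> 2" and alternating: "\<And>b. P (Suc b) \<longleftrightarrow> \<not> P b"
  shows "hub_for (grid_V s) grid_E (grid_comb s P) ({1..s-1} \<times> {b \<in> {1..s}. \<not> P b})"
  unfolding hub_for_def
proof (intro conjI ballI)
  have "(s, s) \<in> grid_comb s P" using assms by (auto simp: grid_comb_def grid_V_def)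
  then show "grid_comb s P \<noteq> {}" by blast
  show "induces_connected grid_E (grid_comb s P)" by (rule grid_comb_connected)
  fix v assume "v \<in> {1..s-1} \<times> {b \<in> {1..s}. \<not> P b}"
  then obtain a b where v: "v = (a, b)" "1 \<le> a" "a < s" "1 \<le> b" "b \<le> s" "\<not> P b" by force
  show "\<exists>h\<in>grid_comb s P. grid_E v h"
  proof (cases "b < s")
    case True
    then have "(a, b + 1) \<in> grid_comb s P" using v alternating by (auto simp: grid_comb_def grid_V_def)
    then show ?thesis using v by (intro bexI[of _ "(a, b + 1)"]) (auto simp: grid_E_def)
  next
    case False
    then have "P (b - 1)" using v alternating[of "b - 1"] by (simp add: Suc_diff_1)
    then have "(a, b - 1) \<in> grid_comb s P" using v assms(1) False by (auto simp: grid_comb_def grid_V_def)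
    then show ?thesis using v assms(1) False by (intro bexI[of _ "(a, b - 1)"]) (auto simp: grid_E_def)
  qed
qed (auto simp: grid_comb_def grid_V_def)

lemma grid_top_rows_hub:
  assumes "s \<ge> 2"
  shows "hub_for (grid_V s) grid_E ({1..s-1} \<times> {1..s}) ({s} \<times> {1..s})"
  unfolding hub_for_def
proof (intro conjI ballI)
  show "induces_connected grid_E ({1..s-1} \<times> {1..s})" by (rule grid_rect_connected)
  fix v assume "v \<in> {s} \<times> {1..s}"
  then have "(s - 1, snd v) \<in> {1..s-1} \<times> {1..s}" "grid_E v (s - 1, snd v)"
    using assms by (auto simp: grid_E_def)
  then show "\<exists>h\<in>{1..s-1} \<times> {1..s}. grid_E v h" by blast
qed (use assms in \<open>auto simp: grid_V_def\<close>)

lemma card_odd_atLeastAtMost: "card {b \<in> {1..2 * h}. odd b} = (h::nat)"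
proof (induction h)
  case (Suc h)
  have "{b \<in> {1..2 * Suc h}. odd b} = insert (2 * h + 1) {b \<in> {1..2 * h}. odd b}"
    by (auto simp: le_Suc_eq)
  then show ?case using Suc by simp
qed simp

lemma card_even_atLeastAtMost: "card {b \<in> {1..2 * h}. even b} = (h::nat)"
proof (induction h)
  case (Suc h)
  have "{b \<in> {1..2 * Suc h}. even b} = insert (2 * h + 2) {b \<in> {1..2 * h}. even b}"
    by (auto simp: le_Suc_eq)
  then show ?case using Suc by simp
qed simp

theorem mainTheorem7:
  fixes s n k :: nat
  assumes "even s" and "s \<ge> 2" and "n = s ^ 2" and "k \<ge> 1"
  shows "M_G (grid_V s) grid_E k \<le> 2 * M_C k (n div 2 - s div 2) + M_C k s + 2"
proof -
  let ?V = "grid_V s" and ?X = "{1..s-1} \<times> {1..s}" and ?L = "{s} \<times> {1..s}"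
  let ?C1 = "{1..s-1} \<times> {b \<in> {1..s}. \<not> even b}" and ?C2 = "{1..s-1} \<times> {b \<in> {1..s}. \<not> odd b}"
  have fin: "finite ?V" by (simp add: grid_V_def)
  have hub1: "hub_for ?V grid_E (grid_comb s even) ?C1"
    and hub2: "hub_for ?V grid_E (grid_comb s odd) ?C2"
    by (rule grid_comb_hub[OF assms(2)], presburger)+
  obtain Rs1 where Rs1: "length Rs1 = M_C k (card ?C1)" "hub_measurements ?V grid_E k (grid_comb s even) ?C1 Rs1"
    by (rule hub_measurements_exist[OF symp_grid_E fin hub1])
  obtain Rs2 where Rs2: "length Rs2 = M_C k (card ?C2)" "hub_measurements ?V grid_E k (grid_comb s odd) ?C2 Rs2"
    by (rule hub_measurements_exist[OF symp_grid_E fin hub2])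
  obtain Rs3 where Rs3: "length Rs3 = M_C k (card ?L)" "hub_measurements ?V grid_E k ?X ?L Rs3"
    by (rule hub_measurements_exist[OF symp_grid_E fin grid_top_rows_hub[OF assms(2)]])
  have cells: "?C1 \<union> ?C2 = ?X" by auto
  have "hub_measurements ?V grid_E k (?C1 \<union> ?C2) ?L Rs3" using Rs3(2) by (simp only: cells)
  moreover have "?V = ?C1 \<union> ?C2 \<union> ?L" unfolding cells using assms(2) by (auto simp: grid_V_def)
  ultimately have bound: "M_G ?V grid_E k \<le> length (grid_comb s even # Rs1 @ grid_comb s odd # Rs2 @ Rs3)"
    by (rule M_G_le_hub_cover[OF hub1 hub2 Rs1(2) Rs2(2)])
  obtain h where h: "s = 2 * h" using assms(1) by blast
  have half: "n div 2 - s div 2 = (s - 1) * h"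
    using assms(3) h by (simp add: power2_eq_square diff_mult_distrib)
  have "card {b \<in> {1..s}. \<not> even b} = h" "card {b \<in> {1..s}. \<not> odd b} = h"
    using card_odd_atLeastAtMost[of h] card_even_atLeastAtMost[of h] h by simp_all
  then have "card ?C1 = n div 2 - s div 2" "card ?C2 = n div 2 - s div 2" "card ?L = s"
    unfolding half by (simp_all only: card_cartesian_product) simp_all
  then show ?thesis using bound Rs1(1) Rs2(1) Rs3(1) by simp
qed

end
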